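(* Let $p$ be a prime with $p \equiv 7 \pmod{12}$. For each primitive $6$th root of unity $u \in \mathbb{Z}_p$, there is a simple $\mathbb{Z}_p$-invariant rank $3$ matroid structure on $\mathbb{Z}_p$ in which a $3$-element subset is a basis unless it is of the form $\{x, x+\alpha^2, x+u\alpha^2\}$ for some $x \in \mathbb{Z}_p$ and $\alpha \in \mathbb{Z}_p^\times$.
   Context: $\mathbb{Z}_p$ acts on itself by translation; a matroid on $\mathbb{Z}_p$ is $\mathbb{Z}_p$-invariant if translates of bases are bases. A matroid is simple if every circuit has at least three elements. *)

theory Defs
  imports "HOL-Computational_Algebra.Primes"
begin

definition matroid_bases :: "'a set \<Rightarrow> 'a set set \<Rightarrow> bool" where
  "matroid_bases E \<B> \<longleftrightarrow> finite E \<and> \<B> \<noteq> {} \<and> (\<forall>B\<in>\<B>. B \<subseteq> E) \<and>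
     (\<forall>B1\<in>\<B>. \<forall>B2\<in>\<B>. \<forall>x\<in>B1 - B2. \<exists>y\<in>B2 - B1. insert y (B1 - {x}) \<in> \<B>)"

definition m_indep :: "'a set set \<Rightarrow> 'a set \<Rightarrow> bool" where
  "m_indep \<B> X \<longleftrightarrow> (\<exists>B\<in>\<B>. X \<subseteq> B)"

definition m_circuit :: "'a set \<Rightarrow> 'a set set \<Rightarrow> 'a set \<Rightarrow> bool" where
  "m_circuit E \<B> C \<longleftrightarrow> C \<subseteq> E \<and> \<not> m_indep \<B> C \<and> (\<forall>D. D \<subset> C \<longrightarrow> m_indep \<B> D)"

definition matroid_rank_is :: "'a set set \<Rightarrow> nat \<Rightarrow> bool" where
  "matroid_rank_is \<B> r \<longleftrightarrow> (\<forall>B\<in>\<B>. card B = r)"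

definition matroid_simple :: "'a set \<Rightarrow> 'a set set \<Rightarrow> bool" where
  "matroid_simple E \<B> \<longleftrightarrow> (\<forall>C. m_circuit E \<B> C \<longrightarrow> card C \<ge> 3)"

text \<open>\<open>\<int>\<^sub>p\<close> is modelled as \<open>{0..<p}\<close> with arithmetic mod p; translation by t.\<close>
definition zp_translate :: "nat \<Rightarrow> nat \<Rightarrow> nat set \<Rightarrow> nat set" where
  "zp_translate p t B = (\<lambda>y. (y + t) mod p) ` B"

definition zp_invariant :: "nat \<Rightarrow> nat set set \<Rightarrow> bool" where
  "zp_invariant p \<B> \<longleftrightarrow> (\<forall>B\<in>\<B>. \<forall>t<p. zp_translate p t B \<in> \<B>)"

definition primitive_6th_root_mod :: "nat \<Rightarrow> nat \<Rightarrow> bool" where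
  "primitive_6th_root_mod p u \<longleftrightarrow> u < p \<and> u ^ 6 mod p = 1 \<and>
     (\<forall>k. 0 < k \<and> k < 6 \<longrightarrow> u ^ k mod p \<noteq> 1)"

end

theory Submission
  imports Defs "HOL-Number_Theory.Number_Theory"
begin

(* Since u is a primitive sixth root of unity, u^2 = u - 1, so the affine map z \<mapsto> 1 + u^2 z
   permutes 0, 1, u cyclically. Hence a triple {x, x + a, x + u a} with a a nonzero square can be
   rewritten as {x', x' + a', x' + u a'}, a' again a nonzero square, with (x', x' + a') any of its
   three cyclically ordered pairs. As p = 3 (mod 4), -1 is not a square, so the difference of two
   points of a triple determines how the pair is oriented in it, and two triples sharing two points
   coincide. A family of 3-sets pairwise meeting in at most one point, on at least four points, is
   the family of dependent 3-sets of a simple rank-3 matroid; translation invariance of the triples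
   passes to the bases. *)

section \<open>Rank-3 matroids from families of lines\<close>

definition rank3_bases :: "'a set \<Rightarrow> 'a set set \<Rightarrow> 'a set set" where
  "rank3_bases E \<L> = {B. B \<subseteq> E \<and> card B = 3 \<and> B \<notin> \<L>}"

context
  fixes E :: "'a set" and \<L> :: "'a set set"
  assumes two_points_one_line:
    "\<And>L M y z. L \<in> \<L> \<Longrightarrow> M \<in> \<L> \<Longrightarrow> y \<noteq> z \<Longrightarrow> {y, z} \<subseteq> L \<Longrightarrow> {y, z} \<subseteq> M \<Longrightarrow> L = M"
begin

lemma rank3_bases_exchange:
  assumes B1: "B1 \<in> rank3_bases E \<L>" and B2: "B2 \<in> rank3_bases E \<L>" and x: "x \<in> B1 - B2"
  shows "\<exists>y\<in>B2 - B1. insert y (B1 - {x}) \<in> rank3_bases E \<L>"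
proof (rule ccontr)
  assume no_exchange: "\<not> ?thesis"
  define P where "P = B1 - {x}"
  have card_B: "card B1 = 3" "card B2 = 3" and finite_B: "finite B1" "finite B2"
    using B1 B2 unfolding rank3_bases_def by (auto intro: card_ge_0_finite)
  have "card P = 2"
    using card_B finite_B x unfolding P_def by simp
  then obtain a b where P: "P = {a, b}" "a \<noteq> b"
    by (meson card_2_iff)
  have "\<not> B2 \<subseteq> B1"
  proof
    assume "B2 \<subseteq> B1"
    then have "B2 = B1"
      using card_B finite_B by (simp add: card_subset_eq)
    then show False
      using x by blast
  qed
  then obtain y0 where y0: "y0 \<in> B2 - B1"
    by blast
  have on_line: "insert y P \<in> \<L>" if y: "y \<in> B2 - B1" for y
  proof -
    have "insert y P \<subseteq> E" "card (insert y P) = 3"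
      using y B1 B2 \<open>card P = 2\<close> finite_B unfolding P_def rank3_bases_def by auto
    then show ?thesis
      using no_exchange y unfolding P_def rank3_bases_def by blast
  qed
  have "finite (insert y0 P)"
    using P by simp
  moreover have "B2 \<subseteq> insert y0 P"
  proof
    fix y assume "y \<in> B2"
    show "y \<in> insert y0 P"
    proof (cases "y \<in> B1")
      case True
      then show ?thesis using x \<open>y \<in> B2\<close> unfolding P_def by blast
    next
      case False
      then have "insert y P = insert y0 P"
        using two_points_one_line[OF on_line on_line, of y y0 a b] \<open>y \<in> B2\<close> y0 P by blast
      then show ?thesis by blast
    qed
  qed
  moreover have "card (insert y0 P) \<le> card B2"
    using card_B \<open>card P = 2\<close> P by (simp add: card_insert_if)
  ultimately have "B2 = insert y0 P"
    by (rule card_seteq)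
  then show False
    using on_line[OF y0] B2 unfolding rank3_bases_def by blast
qed

lemma subset_rank3_basis:
  assumes "finite E" and "4 \<le> card E" and C: "C \<subseteq> E" "card C \<le> 2"
  shows "\<exists>B\<in>rank3_bases E \<L>. C \<subseteq> B"
proof -
  obtain P where P: "C \<subseteq> P" "P \<subseteq> E" "card P = 2"
    using exists_subset_between[OF C(2) _ C(1) \<open>finite E\<close>] \<open>4 \<le> card E\<close> by auto
  then obtain a b where ab: "P = {a, b}" "a \<noteq> b"
    by (meson card_2_iff)
  have "2 \<le> card (E - P)"
    using P \<open>finite E\<close> \<open>4 \<le> card E\<close> by (simp add: card_Diff_subset finite_subset)
  then obtain W where "W \<subseteq> E - P" "card W = 2"
    by (rule obtain_subset_with_card_n)
  then obtain w1 w2 where w: "w1 \<in> E - P" "w2 \<in> E - P" "w1 \<noteq> w2"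
    by (auto simp: card_2_iff)
  have basis: "insert w P \<in> rank3_bases E \<L>" if "w \<in> E - P" "insert w P \<notin> \<L>" for w
    using that P ab unfolding rank3_bases_def by auto
  have "insert w1 P \<noteq> insert w2 P"
    using w by blast
  then have "insert w1 P \<notin> \<L> \<or> insert w2 P \<notin> \<L>"
    using two_points_one_line[of "insert w1 P" "insert w2 P" a b] ab by blast
  then show ?thesis
    using basis w P(1) by blast
qed

lemma matroid_bases_rank3_bases:
  assumes "finite E" and "4 \<le> card E"
  shows "matroid_bases E (rank3_bases E \<L>)"
  unfolding matroid_bases_def
proof (intro conjI ballI)
  show "rank3_bases E \<L> \<noteq> {}"
    using subset_rank3_basis[OF assms, of "{}"] by auto
  show "\<exists>y\<in>B2 - B1. insert y (B1 - {x}) \<in> rank3_bases E \<L>"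
    if "B1 \<in> rank3_bases E \<L>" "B2 \<in> rank3_bases E \<L>" "x \<in> B1 - B2" for B1 B2 x
    using that by (rule rank3_bases_exchange)
qed (use assms in \<open>auto simp: rank3_bases_def\<close>)

lemma matroid_simple_rank3_bases:
  assumes "finite E" and "4 \<le> card E"
  shows "matroid_simple E (rank3_bases E \<L>)"
  unfolding matroid_simple_def
proof (intro allI impI)
  fix C assume "m_circuit E (rank3_bases E \<L>) C"
  then have "\<not> card C \<le> 2"
    using subset_rank3_basis[OF assms] unfolding m_circuit_def m_indep_def by blast
  then show "3 \<le> card C"
    by simp
qed

end

lemma zp_translate_translate: "zp_translate p s (zp_translate p t B) = zp_translate p (t + s) B"
  unfolding zp_translate_def image_image by (simp add: mod_simps ac_simps)

lemma zp_translate_by_p: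
  assumes "B \<subseteq> {0..<p}"
  shows "zp_translate p p B = B"
proof -
  have "(\<lambda>y. (y + p) mod p) ` B = (\<lambda>y. y) ` B"
    using assms by (intro image_cong) auto
  then show ?thesis
    unfolding zp_translate_def by simp
qed

lemma card_zp_translate:
  assumes "B \<subseteq> {0..<p}"
  shows "card (zp_translate p t B) = card B"
  unfolding zp_translate_def
proof (rule card_image, rule inj_onI)
  fix y y' assume "y \<in> B" "y' \<in> B" "(y + t) mod p = (y' + t) mod p"
  then have "[y = y'] (mod p)"
    by (simp flip: cong_def add: cong_add_rcancel_nat)
  moreover have "y < p" "y' < p"
    using assms \<open>y \<in> B\<close> \<open>y' \<in> B\<close> by auto
  ultimately show "y = y'"
    by (simp add: cong_def)
qed

lemma zp_invariant_rank3_bases: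
  assumes "0 < p" and translate_lines: "\<And>L t. L \<in> \<L> \<Longrightarrow> zp_translate p t L \<in> \<L>"
  shows "zp_invariant p (rank3_bases {0..<p} \<L>)"
  unfolding zp_invariant_def
proof (intro ballI allI impI)
  fix B t assume B: "B \<in> rank3_bases {0..<p} \<L>" and "t < p"
  then have "B \<subseteq> {0..<p}" "card B = 3" "B \<notin> \<L>"
    unfolding rank3_bases_def by auto
  have "zp_translate p (p - t) (zp_translate p t B) = B"
    using \<open>t < p\<close> \<open>B \<subseteq> {0..<p}\<close> by (simp add: zp_translate_translate zp_translate_by_p)
  then have "zp_translate p t B \<notin> \<L>"
    using translate_lines \<open>B \<notin> \<L>\<close> by metis
  moreover have "zp_translate p t B \<subseteq> {0..<p}"
    using \<open>0 < p\<close> unfolding zp_translate_def by auto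
  ultimately show "zp_translate p t B \<in> rank3_bases {0..<p} \<L>"
    using card_zp_translate \<open>B \<subseteq> {0..<p}\<close> \<open>card B = 3\<close> unfolding rank3_bases_def by simp
qed

section \<open>Squares modulo a prime \<open>p \<equiv> 3 (mod 4)\<close>\<close>

lemma not_QuadRes_minus_one:
  assumes p: "prime p" and p_mod_4: "p mod 4 = 3"
  shows "\<not> QuadRes (int p) (-1)"
proof
  assume "QuadRes (int p) (-1)"
  have "2 < p" using p_mod_4 prime_gt_1_nat[OF p] by presburger
  have "odd ((p - 1) div 2)" using p_mod_4 by presburger
  then have "[Legendre (-1) (int p) = -1] (mod int p)"
    using euler_criterion[OF p \<open>2 < p\<close>, of "-1"] by simp
  moreover have "Legendre (-1) (int p) = 1"
    using \<open>QuadRes (int p) (-1)\<close> \<open>2 < p\<close> by (simp add: Legendre_def cong_iff_dvd_diff)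
  ultimately have "int p dvd 2"
    by (simp add: cong_iff_dvd_diff)
  then show False using \<open>2 < p\<close> by (simp add: zdvd_not_zless)
qed

lemma prime_3_mod_4_dvd_sum_squares:
  fixes s t :: nat
  assumes p: "prime p" and p_mod_4: "p mod 4 = 3" and st: "[s^2 + t^2 = 0] (mod p)"
  shows "p dvd s"
proof (rule ccontr)
  assume "\<not> p dvd s"
  then obtain s' where s': "[s * s' = 1] (mod p)"
    using cong_solve_coprime_nat prime_imp_coprime[OF p] coprime_commute by (metis One_nat_def)
  have "[(s * s')^2 + (t * s')^2 = 0] (mod p)"
    using cong_scalar_right[OF st, of "s'^2"] by (simp add: power_mult_distrib algebra_simps)
  then have "[1 + (t * s')^2 = 0] (mod p)"
    using s' by (metis cong_add_rcancel_nat cong_pow cong_sym cong_trans power_one)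
  then have "int p dvd int (1 + (t * s')^2)"
    by (simp only: cong_0_iff of_nat_dvd_iff)
  then have "int p dvd int ((t * s')^2) - (-1)"
    by (simp add: add.commute)
  then have "QuadRes (int p) (-1)"
    unfolding QuadRes_def cong_iff_dvd_diff by (metis of_nat_power)
  then show False using not_QuadRes_minus_one[OF p p_mod_4] by blast
qed

section \<open>The Netto triples\<close>

lemma primitive_6th_root_mod_imp_cong:
  assumes p: "prime p" and u: "primitive_6th_root_mod p u"
  shows "[u^2 + 1 = u] (mod p)"
proof -
  define v where "v = int u"
  have p1: "p > 1" using p prime_gt_1_nat by blast
  have pi: "prime (int p)" using p by simp
  have not_dvd: "\<not> int p dvd v^k - 1" if "0 < k" "k < 6" for k
  proof
    assume "int p dvd v^k - 1"
    then have "[u^k = 1] (mod p)"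
      by (simp add: v_def flip: cong_iff_dvd_diff cong_int_iff)
    then show False using u that p1 unfolding primitive_6th_root_mod_def by (simp add: cong_def)
  qed
  have "[u^6 = 1] (mod p)" using u p1 unfolding primitive_6th_root_mod_def by (simp add: cong_def)
  then have "int p dvd (v^3 - 1) * (v^3 + 1)"
    by (simp add: v_def cong_iff_dvd_diff flip: cong_int_iff) (simp add: algebra_simps flip: power_add)
  then have "int p dvd v^3 + 1"
    using not_dvd[of 3] pi by (simp add: prime_dvd_mult_iff)
  also have "v^3 + 1 = (v + 1) * (v^2 - v + 1)"
    by (simp add: algebra_simps power2_eq_square power3_eq_cube)
  finally have "int p dvd (v + 1) * (v^2 - v + 1)" .
  moreover have "\<not> int p dvd v + 1"
  proof
    assume "int p dvd v + 1"
    then have "int p dvd (v + 1) * (v - 1)" by simp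
    also have "(v + 1) * (v - 1) = v^2 - 1" by (simp add: algebra_simps power2_eq_square)
    finally show False using not_dvd[of 2] by simp
  qed
  ultimately have "int p dvd v^2 - v + 1"
    using pi prime_dvd_mult_iff by blast
  then have "[int (u^2 + 1) = int u] (mod int p)"
    by (simp add: v_def cong_iff_dvd_diff algebra_simps)
  then show ?thesis by (simp only: cong_int_iff)
qed

(* u^2 + 1 = u is u^2 - u + 1 = 0 written without natural-number subtraction. *)
locale netto =
  fixes p u :: nat
  assumes prime_p: "prime p" and p_mod_4: "p mod 4 = 3" and u_root: "[u^2 + 1 = u] (mod p)"
begin

definition line :: "nat \<Rightarrow> nat \<Rightarrow> nat set" where
  "line x a = {x mod p, (x + a) mod p, (x + u * a) mod p}"

definition nonzero_square :: "nat \<Rightarrow> bool" where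
  "nonzero_square a \<longleftrightarrow> (\<exists>s. [s^2 = a] (mod p)) \<and> \<not> p dvd a"

lemma u_cube_cong: "[u^3 + 1 = 0] (mod p)"
proof -
  have "[u^3 + 1 + u = (u^2 + 1) * u + 1] (mod p)"
    by (simp add: algebra_simps power2_eq_square power3_eq_cube)
  also have "[(u^2 + 1) * u + 1 = u * u + 1] (mod p)"
    using u_root by (intro cong_add cong_mult) auto
  also have "[u * u + 1 = u^2 + 1] (mod p)"
    by (simp add: power2_eq_square)
  also have "[u^2 + 1 = 0 + u] (mod p)"
    using u_root by simp
  finally show ?thesis
    by (simp only: cong_add_rcancel_nat)
qed

lemma line_cong:
  assumes "[x = x'] (mod p)" and "[a = a'] (mod p)"
  shows "line x a = line x' a'"
proof -
  have "[x + a = x' + a'] (mod p)" "[x + u * a = x' + u * a'] (mod p)"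
    using assms by (auto intro: cong_add cong_scalar_left)
  then show ?thesis
    using assms unfolding line_def cong_def by simp
qed

lemma line_rotate_points:
  shows "(x + a + u^2 * a) mod p = (x + u * a) mod p"
    and "(x + a + u * (u^2 * a)) mod p = x mod p"
proof -
  have "[x + a + u^2 * a = x + (u^2 + 1) * a] (mod p)"
    by (simp add: algebra_simps)
  also have "[x + (u^2 + 1) * a = x + u * a] (mod p)"
    using u_root by (intro cong_add cong_scalar_right) auto
  finally show "(x + a + u^2 * a) mod p = (x + u * a) mod p"
    by (simp only: cong_def)
  have "[x + a + u * (u^2 * a) = x + (u^3 + 1) * a] (mod p)"
    by (simp add: algebra_simps power2_eq_square power3_eq_cube)
  also have "[x + (u^3 + 1) * a = x + 0 * a] (mod p)"
    using u_cube_cong by (intro cong_add cong_scalar_right) auto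
  finally show "(x + a + u * (u^2 * a)) mod p = x mod p"
    by (simp add: cong_def)
qed

lemma line_rotate: "line (x + a) (u^2 * a) = line x a"
  unfolding line_def line_rotate_points by auto

lemma p_not_dvd_u: "\<not> p dvd u"
proof
  assume "p dvd u"
  then have "p dvd u^2 + 1"
    using u_root by (metis cong_0_iff cong_trans)
  moreover have "p dvd u^2"
    using \<open>p dvd u\<close> by (simp add: power2_eq_square)
  ultimately have "p dvd 1"
    using dvd_add_right_iff by blast
  then show False
    using prime_p by simp
qed

lemma nonzero_square_power2: "\<not> p dvd s \<Longrightarrow> nonzero_square (s^2)"
  unfolding nonzero_square_def using prime_p by (meson cong_refl prime_dvd_power)

lemma nonzero_square_mult:
  assumes "nonzero_square a" and "nonzero_square b"
  shows "nonzero_square (a * b)"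
proof -
  obtain s t where "[s^2 = a] (mod p)" "[t^2 = b] (mod p)"
    using assms unfolding nonzero_square_def by blast
  then have "[(s * t)^2 = a * b] (mod p)"
    by (simp add: power_mult_distrib cong_mult)
  moreover have "\<not> p dvd a * b"
    using assms prime_p unfolding nonzero_square_def by (simp add: prime_dvd_mult_iff)
  ultimately show ?thesis
    unfolding nonzero_square_def by blast
qed

lemma nonzero_square_mult_u2: "nonzero_square a \<Longrightarrow> nonzero_square (u^2 * a)"
  using nonzero_square_mult nonzero_square_power2 p_not_dvd_u by blast

lemma sum_nonzero_squares_not_cong_0:
  assumes "nonzero_square a" and "nonzero_square b"
  shows "\<not> [a + b = 0] (mod p)"
proof
  assume "[a + b = 0] (mod p)"
  obtain s t where "[s^2 = a] (mod p)" "[t^2 = b] (mod p)"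
    using assms unfolding nonzero_square_def by blast
  then have "[s^2 + t^2 = 0] (mod p)"
    using \<open>[a + b = 0] (mod p)\<close> by (meson cong_add cong_trans)
  then have "p dvd s^2"
    using prime_3_mod_4_dvd_sum_squares[OF prime_p p_mod_4] by (simp add: power2_eq_square)
  then have "p dvd a"
    using \<open>[s^2 = a] (mod p)\<close> by (simp add: cong_dvd_iff)
  then show False
    using assms unfolding nonzero_square_def by blast
qed

lemma line_through_two_points:
  assumes a: "nonzero_square a" and yz: "{y, z} \<subseteq> line x a" "y \<noteq> z"
  shows "\<exists>x' a'. nonzero_square a' \<and> line x' a' = line x a \<and> {y, z} = {x' mod p, (x' + a') mod p}"
proof -
  from yz consider
      "{y, z} = {x mod p, (x + a) mod p}"
    | "{y, z} = {(x + a) mod p, (x + u * a) mod p}"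
    | "{y, z} = {(x + u * a) mod p, x mod p}"
    unfolding line_def by auto
  then show ?thesis
  proof cases
    case 1
    then show ?thesis using a by blast
  next
    case 2
    show ?thesis
    proof (intro exI conjI)
      show "nonzero_square (u^2 * a)" using nonzero_square_mult_u2[OF a] .
      show "line (x + a) (u^2 * a) = line x a" by (rule line_rotate)
      show "{y, z} = {(x + a) mod p, (x + a + u^2 * a) mod p}"
        using 2 by (simp only: line_rotate_points)
    qed
  next
    case 3
    show ?thesis
    proof (intro exI conjI)
      show "nonzero_square (u^2 * (u^2 * a))" using nonzero_square_mult_u2 a by blast
      show "line (x + a + u^2 * a) (u^2 * (u^2 * a)) = line x a" by (simp only: line_rotate)
      show "{y, z} = {(x + a + u^2 * a) mod p, (x + a + u^2 * a + u^2 * (u^2 * a)) mod p}"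
        using 3 by (simp only: line_rotate_points)
    qed
  qed
qed

lemma line_unique:
  assumes a: "nonzero_square a" and b: "nonzero_square b" and yz: "y \<noteq> z"
    and on_a: "{y, z} \<subseteq> line x a" and on_b: "{y, z} \<subseteq> line x' b"
  shows "line x a = line x' b"
proof -
  obtain x1 a1 where a1: "nonzero_square a1" and line1: "line x1 a1 = line x a"
    and yz1: "{y, z} = {x1 mod p, (x1 + a1) mod p}"
    using line_through_two_points[OF a on_a yz] by blast
  obtain x2 a2 where a2: "nonzero_square a2" and line2: "line x2 a2 = line x' b"
    and yz2: "{y, z} = {x2 mod p, (x2 + a2) mod p}"
    using line_through_two_points[OF b on_b yz] by blast
  from yz1 yz2 consider
      "[x1 = x2] (mod p)" "[x1 + a1 = x2 + a2] (mod p)"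
    | "[x1 = x2 + a2] (mod p)" "[x1 + a1 = x2] (mod p)"
    unfolding cong_def by (auto simp: doubleton_eq_iff)
  then show ?thesis
  proof cases
    case 1
    have "[x2 + a2 = x1 + a2] (mod p)"
      using 1(1) by (simp add: cong_sym cong_add_rcancel_nat)
    with 1(2) have "[a1 = a2] (mod p)"
      by (meson cong_trans cong_add_lcancel_nat)
    then have "line x1 a1 = line x2 a2"
      using 1(1) by (rule line_cong[rotated])
    then show ?thesis
      using line1 line2 by simp
  next
    case 2
    have "[x1 + a1 + a2 = x2 + a2] (mod p)"
      using 2(2) by (simp add: cong_add_rcancel_nat)
    with 2(1) have "[x1 + (a1 + a2) = x1] (mod p)"
      by (metis add.assoc cong_sym cong_trans)
    then show ?thesis
      using sum_nonzero_squares_not_cong_0[OF a1 a2] by (simp add: cong_add_lcancel_0_nat)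
  qed
qed

lemma zp_translate_line: "zp_translate p t (line x a) = line (x + t) a"
  unfolding zp_translate_def line_def by (simp add: mod_simps ac_simps)

definition lines :: "nat set set" where
  "lines = {line x (\<alpha>^2) | x \<alpha>. x < p \<and> 0 < \<alpha> \<and> \<alpha> < p}"

lemma mem_lines_iff:
  "S \<in> lines \<longleftrightarrow>
     (\<exists>x \<alpha>. x < p \<and> \<alpha> < p \<and> \<alpha> \<noteq> 0 \<and> S = {x, (x + \<alpha>^2) mod p, (x + u * \<alpha>^2) mod p})"
proof
  assume "S \<in> lines"
  then obtain x \<alpha> where "S = line x (\<alpha>^2)" "x < p" "0 < \<alpha>" "\<alpha> < p"
    unfolding lines_def by blast
  then show "\<exists>x \<alpha>. x < p \<and> \<alpha> < p \<and> \<alpha> \<noteq> 0 \<and> S = {x, (x + \<alpha>^2) mod p, (x + u * \<alpha>^2) mod p}"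
    unfolding line_def by (intro exI[of _ x] exI[of _ \<alpha>]) simp
next
  assume "\<exists>x \<alpha>. x < p \<and> \<alpha> < p \<and> \<alpha> \<noteq> 0 \<and> S = {x, (x + \<alpha>^2) mod p, (x + u * \<alpha>^2) mod p}"
  then obtain x \<alpha> where "x < p" "\<alpha> < p" "0 < \<alpha>" "S = line x (\<alpha>^2)"
    unfolding line_def by auto
  then show "S \<in> lines"
    unfolding lines_def by blast
qed

lemma lines_two_points_one_line:
  assumes "L \<in> lines" "M \<in> lines" "y \<noteq> z" "{y, z} \<subseteq> L" "{y, z} \<subseteq> M"
  shows "L = M"
proof -
  have nonzero_square: "nonzero_square (\<alpha>^2)" if "0 < \<alpha>" "\<alpha> < p" for \<alpha>
    using that by (intro nonzero_square_power2) (simp add: nat_dvd_not_less)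
  obtain x \<alpha> where L: "L = line x (\<alpha>^2)" "0 < \<alpha>" "\<alpha> < p"
    using \<open>L \<in> lines\<close> unfolding lines_def by blast
  obtain x' \<beta> where M: "M = line x' (\<beta>^2)" "0 < \<beta>" "\<beta> < p"
    using \<open>M \<in> lines\<close> unfolding lines_def by blast
  from assms(4,5) show ?thesis
    unfolding L(1) M(1) by (rule line_unique[OF nonzero_square[OF L(2,3)] nonzero_square[OF M(2,3)] \<open>y \<noteq> z\<close>])
qed

lemma zp_translate_lines:
  assumes "L \<in> lines"
  shows "zp_translate p t L \<in> lines"
proof -
  obtain x \<alpha> where L: "L = line x (\<alpha>^2)" "0 < \<alpha>" "\<alpha> < p"
    using assms unfolding lines_def by blast
  have "zp_translate p t L = line ((x + t) mod p) (\<alpha>^2)"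
    unfolding L zp_translate_line by (rule line_cong) (simp_all add: cong_def)
  moreover have "(x + t) mod p < p"
    using L(3) by simp
  ultimately show ?thesis
    using L unfolding lines_def by blast
qed

end

theorem proposition3p13:
  fixes p u :: nat
  assumes "prime p" and "p mod 12 = 7" and "primitive_6th_root_mod p u"
  shows "\<exists>\<B>. matroid_bases {0..<p} \<B> \<and> matroid_rank_is \<B> 3 \<and>
           matroid_simple {0..<p} \<B> \<and> zp_invariant p \<B> \<and>
           (\<forall>S. S \<subseteq> {0..<p} \<and> card S = 3 \<longrightarrow>
              (S \<in> \<B> \<longleftrightarrow>
                 \<not> (\<exists>x \<alpha>. x < p \<and> \<alpha> < p \<and> \<alpha> \<noteq> 0 \<and>
                        S = {x, (x + \<alpha>^2) mod p, (x + u * \<alpha>^2) mod p})))"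
proof -
  have "p mod 4 = 3" and "4 \<le> p"
    using assms(2) by presburger+
  then have "4 \<le> card {0..<p}"
    by simp
  interpret netto p u
    using assms(1) \<open>p mod 4 = 3\<close> primitive_6th_root_mod_imp_cong[OF assms(1,3)] by unfold_locales
  show ?thesis
    unfolding mem_lines_iff[symmetric]
  proof (intro exI conjI allI impI)
    show "matroid_bases {0..<p} (rank3_bases {0..<p} lines)"
      by (rule matroid_bases_rank3_bases[OF lines_two_points_one_line])
        (use \<open>4 \<le> card {0..<p}\<close> in simp_all)
    show "matroid_simple {0..<p} (rank3_bases {0..<p} lines)"
      by (rule matroid_simple_rank3_bases[OF lines_two_points_one_line])
        (use \<open>4 \<le> card {0..<p}\<close> in simp_all)
    show "zp_invariant p (rank3_bases {0..<p} lines)"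
      by (rule zp_invariant_rank3_bases[OF prime_gt_0_nat[OF assms(1)] zp_translate_lines])
  qed (auto simp: matroid_rank_is_def rank3_bases_def)
qed

end
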